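(* Let $q$ be a prime power, $s,\ell$ positive integers, $\alpha,\beta\in\{1,-1\}\subseteq\mathbb{F}_q$, let $r$ be the multiplicative order of $\beta$ (so $r=1$ if $\beta=1$, $r=2$ if $\beta=-1\neq 1$), and assume $q\equiv 1\pmod{r\ell}$. Let $\omega\in\mathbb{F}_q$ be a primitive $r\ell$-th root of unity with $\omega^\ell=\beta$, and $\eta_k(y)=\prod_{j\ne k,\,0\le j\le \ell-1}\frac{y-\omega^{1+jr}}{\omega^{1+kr}-\omega^{1+jr}}$ for $0\le k\le\ell-1$. Let $\mathcal{C}$ be an ideal of $\mathcal{R}=\mathbb{F}_q[x,y]/\langle x^s-\alpha,y^\ell-\beta\rangle$; for $j=0,\dots,\ell-1$ let $p_j(x)$ be the monic divisor of $x^s-\alpha$ generating $I_j=\{f(x)\in\mathbb{F}_q[x]/\langle x^s-\alpha\rangle:\eta_j(y)f(x)\in\mathcal{C}\}$, $a_j=\deg p_j(x)$, and $p_j'(x)\in\mathbb{F}_q[x]$ with $p_j(x)p_j'(x)=x^s-\alpha$. Then the dual code satisfies $$\mathcal{C}^\perp=\big\langle p_0'^*(x)\eta_0^*(y),\ p_1'^*(x)\eta_1^*(y),\ \dots,\ p_{\ell-1}'^*(x)\eta_{\ell-1}^*(y)\big\rangle,$$ and the elements $x^i p_j'^*(x)\eta_j^*(y)$, $0\le j\le \ell-1$, $0\le i\le a_j-1$, form a basis of $\mathcal{C}^\perp$ over $\mathbb{F}_q$ (i.e. the matrix with these rows is a generator matrix of $\mathcal{C}^\perp$).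
   Context: An element $\sum_{i,j}c_{i,j}x^iy^j$ of $\mathcal{R}$ ($0\le i\le s-1$, $0\le j\le\ell-1$) is identified with the vector $(c_{i,j})$ of length $s\ell$; ideals of $\mathcal{R}$ are two-dimensional $(\alpha,\beta)$-constacyclic codes. $\mathcal{C}^\perp$ is the dual with respect to the Euclidean inner product $\sum_{i,j}c_{i,j}d_{i,j}$; for $\alpha,\beta\in\{\pm1\}$ it is again an ideal of $\mathcal{R}$. For a nonzero polynomial $f$ of degree $k$, its reciprocal is $f^*(x)=x^kf(1/x)$ (so $\eta_j^*(y)=y^{\ell-1}\eta_j(1/y)$). *)

theory Defs
  imports "HOL-Computational_Algebra.Polynomial"
begin

text \<open>Elements of R = F[x,y]/<x^s - alpha, y^l - beta> are represented by their
coefficient arrays c i j (coefficient of x^i y^j), with i < s, j < l, and zero outside.\<close>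

definition R_carrier :: "nat \<Rightarrow> nat \<Rightarrow> (nat \<Rightarrow> nat \<Rightarrow> 'a::field) set" where
  "R_carrier s l = {c. \<forall>i j. (s \<le> i \<or> l \<le> j) \<longrightarrow> c i j = 0}"

definition R_add :: "(nat \<Rightarrow> nat \<Rightarrow> 'a::field) \<Rightarrow> (nat \<Rightarrow> nat \<Rightarrow> 'a) \<Rightarrow> nat \<Rightarrow> nat \<Rightarrow> 'a" where
  "R_add c d = (\<lambda>i j. c i j + d i j)"

definition R_zero :: "nat \<Rightarrow> nat \<Rightarrow> 'a::field" where
  "R_zero = (\<lambda>i j. 0)"

definition R_smult :: "'a::field \<Rightarrow> (nat \<Rightarrow> nat \<Rightarrow> 'a) \<Rightarrow> nat \<Rightarrow> nat \<Rightarrow> 'a" where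
  "R_smult a c = (\<lambda>i j. a * c i j)"

text \<open>Multiplication in R, using x^s = alpha and y^l = beta.\<close>
definition R_mul :: "nat \<Rightarrow> nat \<Rightarrow> 'a::field \<Rightarrow> 'a \<Rightarrow>
    (nat \<Rightarrow> nat \<Rightarrow> 'a) \<Rightarrow> (nat \<Rightarrow> nat \<Rightarrow> 'a) \<Rightarrow> nat \<Rightarrow> nat \<Rightarrow> 'a" where
  "R_mul s l \<alpha> \<beta> c d = (\<lambda>i j. if i < s \<and> j < l then
      (\<Sum>a<s. \<Sum>b<l. \<Sum>a'<s. \<Sum>b'<l.
         if (a + a') mod s = i \<and> (b + b') mod l = j
         then \<alpha> ^ ((a + a') div s) * \<beta> ^ ((b + b') div l) * c a b * d a' b' else 0)
    else 0)"

text \<open>Image in R of the product f(x) g(y) of univariate polynomials.\<close>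
definition R_emb :: "nat \<Rightarrow> nat \<Rightarrow> 'a::field \<Rightarrow> 'a \<Rightarrow> 'a poly \<Rightarrow> 'a poly \<Rightarrow> nat \<Rightarrow> nat \<Rightarrow> 'a" where
  "R_emb s l \<alpha> \<beta> f g = (\<lambda>i j. if i < s \<and> j < l then
      (\<Sum>a\<le>degree f. \<Sum>b\<le>degree g.
         if a mod s = i \<and> b mod l = j
         then \<alpha> ^ (a div s) * \<beta> ^ (b div l) * coeff f a * coeff g b else 0)
    else 0)"

definition R_ideal :: "nat \<Rightarrow> nat \<Rightarrow> 'a::field \<Rightarrow> 'a \<Rightarrow> (nat \<Rightarrow> nat \<Rightarrow> 'a) set \<Rightarrow> bool" where
  "R_ideal s l \<alpha> \<beta> I \<longleftrightarrow> I \<subseteq> R_carrier s l \<and> R_zero \<in> I \<and>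
     (\<forall>c\<in>I. \<forall>d\<in>I. R_add c d \<in> I) \<and>
     (\<forall>c\<in>I. \<forall>r\<in>R_carrier s l. R_mul s l \<alpha> \<beta> r c \<in> I)"

definition R_gen_ideal :: "nat \<Rightarrow> nat \<Rightarrow> 'a::field \<Rightarrow> 'a \<Rightarrow> (nat \<Rightarrow> nat \<Rightarrow> 'a) set \<Rightarrow> (nat \<Rightarrow> nat \<Rightarrow> 'a) set" where
  "R_gen_ideal s l \<alpha> \<beta> G = \<Inter>{I. R_ideal s l \<alpha> \<beta> I \<and> G \<subseteq> I}"

definition R_dual :: "nat \<Rightarrow> nat \<Rightarrow> (nat \<Rightarrow> nat \<Rightarrow> 'a::field) set \<Rightarrow> (nat \<Rightarrow> nat \<Rightarrow> 'a) set" where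
  "R_dual s l C = {d \<in> R_carrier s l. \<forall>c\<in>C. (\<Sum>i<s. \<Sum>j<l. c i j * d i j) = 0}"

definition lin_comb :: "'i set \<Rightarrow> ('i \<Rightarrow> 'a::field) \<Rightarrow> ('i \<Rightarrow> nat \<Rightarrow> nat \<Rightarrow> 'a) \<Rightarrow> nat \<Rightarrow> nat \<Rightarrow> 'a" where
  "lin_comb A u B = (\<lambda>i j. \<Sum>k\<in>A. u k * B k i j)"

definition fam_span :: "'i set \<Rightarrow> ('i \<Rightarrow> nat \<Rightarrow> nat \<Rightarrow> 'a::field) \<Rightarrow> (nat \<Rightarrow> nat \<Rightarrow> 'a) set" where
  "fam_span A B = {lin_comb A u B | u. True}"

definition fam_indep :: "'i set \<Rightarrow> ('i \<Rightarrow> nat \<Rightarrow> nat \<Rightarrow> 'a::field) \<Rightarrow> bool" where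
  "fam_indep A B \<longleftrightarrow> (\<forall>u. lin_comb A u B = R_zero \<longrightarrow> (\<forall>k\<in>A. u k = 0))"

definition mult_order :: "'a::field \<Rightarrow> nat" where
  "mult_order b = (LEAST n. 0 < n \<and> b ^ n = 1)"

definition primitive_root :: "nat \<Rightarrow> 'a::field \<Rightarrow> bool" where
  "primitive_root n w \<longleftrightarrow> w ^ n = 1 \<and> (\<forall>k. 0 < k \<and> k < n \<longrightarrow> w ^ k \<noteq> 1)"

definition eta :: "nat \<Rightarrow> nat \<Rightarrow> 'a::field \<Rightarrow> nat \<Rightarrow> 'a poly" where
  "eta l r w k = (\<Prod>j\<in>{0..<l} - {k}.
      smult (inverse (w ^ (1 + k * r) - w ^ (1 + j * r))) [:- (w ^ (1 + j * r)), 1:])"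

end

theory Submission
  imports Defs
begin

(* Substituting y := v with v^l = beta is a ring homomorphism from R to F[x]/<x^s - alpha>.  At the
   l roots v_m = omega^(1 + m r) of y^l - beta the Vandermonde relations
   sum_m v_m^a v_m^(-b) = l * delta_ab hold, and l is invertible because q = 1 (mod r l); hence
   c |-> (c(x, v_m))_m is injective and the inner product of c and d equals 1/l times the sum over m
   of the coefficient pairings of c(x, v_m) and d(x, 1/v_m).  As eta_j(v_m) = delta_jm, the m-th
   component of C consists exactly of the multiples of p_m, and the one-variable duality for
   x^s - alpha = p_m p'_m (the multiples of p_m are orthogonal precisely to the multiples of the
   reciprocal of p'_m) shows that d lies in the dual iff p'_m^* divides d(x, 1/v_m) for every m.
   Since eta_j^*(1/v_m) vanishes for j ~= m, the elements x^i p'_j^* eta_j^* realise these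
   conditions blockwise, which gives the basis; the dual is an ideal, which gives the generators. *)

definition poly_inner :: "nat \<Rightarrow> 'a::comm_ring poly \<Rightarrow> 'a poly \<Rightarrow> 'a" where
  "poly_inner n f g = (\<Sum>i<n. coeff f i * coeff g i)"

definition R_inner :: "nat \<Rightarrow> nat \<Rightarrow> (nat \<Rightarrow> nat \<Rightarrow> 'a::field) \<Rightarrow> (nat \<Rightarrow> nat \<Rightarrow> 'a) \<Rightarrow> 'a" where
  "R_inner s l c d = (\<Sum>i<s. \<Sum>j<l. c i j * d i j)"

lemma R_dual_altdef: "R_dual s l C = {d \<in> R_carrier s l. \<forall>c\<in>C. R_inner s l c d = 0}"
  by (simp add: R_dual_def R_inner_def)

lemma R_emb_carrier: "R_emb s l \<alpha> \<beta> f g \<in> R_carrier s l"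
  by (simp add: R_emb_def R_carrier_def)

lemma R_mul_carrier: "R_mul s l \<alpha> \<beta> c d \<in> R_carrier s l"
  by (simp add: R_mul_def R_carrier_def)

lemma R_add_carrier: "c \<in> R_carrier s l \<Longrightarrow> d \<in> R_carrier s l \<Longrightarrow> R_add c d \<in> R_carrier s l"
  by (simp add: R_add_def R_carrier_def)

lemma R_smult_carrier: "c \<in> R_carrier s l \<Longrightarrow> R_smult a c \<in> R_carrier s l"
  by (simp add: R_smult_def R_carrier_def)

lemma R_zero_carrier: "R_zero \<in> R_carrier s l"
  by (simp add: R_zero_def R_carrier_def)

lemma lin_comb_carrier: "(\<And>k. k \<in> A \<Longrightarrow> B k \<in> R_carrier s l) \<Longrightarrow> lin_comb A u B \<in> R_carrier s l"
  by (simp add: lin_comb_def R_carrier_def)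

section \<open>Substituting for y\<close>

definition eval_y :: "nat \<Rightarrow> nat \<Rightarrow> (nat \<Rightarrow> nat \<Rightarrow> 'a::field) \<Rightarrow> 'a \<Rightarrow> 'a poly" where
  "eval_y s l c v = (\<Sum>i<s. monom (\<Sum>j<l. c i j * v ^ j) i)"

lemma coeff_eval_y: "coeff (eval_y s l c v) n = (if n < s then \<Sum>j<l. c n j * v ^ j else 0)"
  by (simp add: eval_y_def coeff_sum coeff_monom)

lemma degree_eval_y_less: "0 < s \<Longrightarrow> degree (eval_y s l c v) < s"
  using degree_le[of "s - 1" "eval_y s l c v"] by (force simp: coeff_eval_y)

lemma eval_y_R_add: "eval_y s l (R_add c d) v = eval_y s l c v + eval_y s l d v"
  by (rule poly_eqI) (simp add: coeff_eval_y R_add_def algebra_simps sum.distrib)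

lemma eval_y_R_smult: "eval_y s l (R_smult a c) v = smult a (eval_y s l c v)"
  by (rule poly_eqI) (simp add: coeff_eval_y R_smult_def sum_distrib_left ac_simps)

lemma eval_y_R_zero: "eval_y s l R_zero v = 0"
  by (rule poly_eqI) (simp add: coeff_eval_y R_zero_def)

lemma eval_y_lin_comb: "eval_y s l (lin_comb A u B) v = (\<Sum>k\<in>A. smult (u k) (eval_y s l (B k) v))"
  by (rule poly_eqI)
    (auto simp: coeff_eval_y lin_comb_def coeff_sum sum_distrib_left sum_distrib_right ac_simps
      intro: sum.swap)

lemma degree_binomial:
  "0 < s \<Longrightarrow> degree (monom (1::'a::field) s - [:\<alpha>:]) = s"
  using degree_add_eq_left[of "[:- \<alpha>:]" "monom 1 s"] by (simp add: degree_monom_eq diff_conv_add_uminus)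

lemma binomial_dvd_monom_reduce:
  "(monom (1::'a::field) s - [:\<alpha>:]) dvd (monom c n - monom (\<alpha> ^ (n div s) * c) (n mod s))"
proof -
  define q m where "q = n div s" and "m = n mod s"
  have "monom c n - monom (\<alpha> ^ q * c) m = monom c m * (monom 1 s ^ q - [:\<alpha>:] ^ q)"
    by (simp add: q_def m_def monom_power mult_monom algebra_simps flip: monom_0)
  also have "(monom 1 s - [:\<alpha>:]) dvd \<dots>"
    by (simp add: power_diff_sumr2)
  finally show ?thesis by (simp add: q_def m_def)
qed

lemma mod_binomial_eqI:
  assumes "0 < s" "degree E < s" "(monom 1 s - [:\<alpha>:]) dvd (P - E)"
  shows "P mod (monom 1 s - [:\<alpha>:]) = (E::'a::field poly)"
proof -
  have "P mod (monom 1 s - [:\<alpha>:]) = E mod (monom 1 s - [:\<alpha>:])"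
    using assms(3) by (simp add: mod_eq_dvd_iff)
  also have "\<dots> = E"
    using assms(1,2) by (simp add: mod_poly_less degree_binomial)
  finally show ?thesis .
qed

lemma sum_if_delta2:
  fixes g :: "nat \<Rightarrow> nat \<Rightarrow> 'a::comm_monoid_add"
  assumes "a < m" "b < n"
  shows "(\<Sum>i<m. \<Sum>j<n. if a = i \<and> b = j then g i j else 0) = g a b"
proof -
  have "(\<Sum>j<n. if a = i \<and> b = j then g i j else 0) = (if a = i then g i b else 0)" for i
    using assms(2) by (cases "a = i") simp_all
  then show ?thesis
    using assms(1) by simp
qed

(* The hypothesis on M says that M is the reduction in R of the formal sum of the monomials
   K z x^(ex z) y^(ey z). *)
lemma eval_y_reduce:
  fixes K :: "'z \<Rightarrow> 'a::field"
  assumes "finite A" and s: "0 < s" and l: "0 < l" and v: "v ^ l = \<beta>"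
    and M: "\<And>i j. i < s \<Longrightarrow> j < l \<Longrightarrow> M i j = (\<Sum>z\<in>A.
      if ex z mod s = i \<and> ey z mod l = j then \<alpha> ^ (ex z div s) * \<beta> ^ (ey z div l) * K z else 0)"
  shows "eval_y s l M v = (\<Sum>z\<in>A. monom (K z * v ^ ey z) (ex z)) mod (monom 1 s - [:\<alpha>:])"
proof (rule sym, rule mod_binomial_eqI[OF s degree_eval_y_less[OF s]])
  have v_pow: "v ^ ey z = \<beta> ^ (ey z div l) * v ^ (ey z mod l)" for z
  proof -
    have "v ^ (l * q + k) = \<beta> ^ q * v ^ k" for q k
      by (simp add: power_add power_mult v)
    then show ?thesis
      by (metis mult_div_mod_eq)
  qed
  have delta: "(\<Sum>i<s. \<Sum>j<l. monom ((if a = i \<and> b = j then C else 0) * v ^ j) i) = monom (C * v ^ b) a"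
    if "a < s" "b < l" for a b C
  proof -
    have "monom ((if a = i \<and> b = j then C else 0) * v ^ j) i
        = (if a = i \<and> b = j then monom (C * v ^ j) i else 0)" for i j
      by simp
    then show ?thesis
      using sum_if_delta2[OF that, of "\<lambda>i j. monom (C * v ^ j) i"] by simp
  qed
  have "eval_y s l M v = (\<Sum>i<s. \<Sum>j<l. \<Sum>z\<in>A. monom ((if ex z mod s = i \<and> ey z mod l = j
      then \<alpha> ^ (ex z div s) * \<beta> ^ (ey z div l) * K z else 0) * v ^ j) i)"
    unfolding eval_y_def by (simp add: M monom_sum sum_distrib_right)
  also have "\<dots> = (\<Sum>z\<in>A. \<Sum>i<s. \<Sum>j<l. monom ((if ex z mod s = i \<and> ey z mod l = j
      then \<alpha> ^ (ex z div s) * \<beta> ^ (ey z div l) * K z else 0) * v ^ j) i)"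
    by (subst sum.swap, rule sum.cong[OF refl], rule sum.swap)
  also have "\<dots> = (\<Sum>z\<in>A. monom (\<alpha> ^ (ex z div s) * \<beta> ^ (ey z div l) * K z * v ^ (ey z mod l))
      (ex z mod s))"
    using s l by (intro sum.cong refl) (simp add: delta)
  also have "\<dots> = (\<Sum>z\<in>A. monom (\<alpha> ^ (ex z div s) * (K z * v ^ ey z)) (ex z mod s))"
    by (simp add: v_pow ac_simps)
  finally have "eval_y s l M v = \<dots>" .
  then show "(monom 1 s - [:\<alpha>:]) dvd (\<Sum>z\<in>A. monom (K z * v ^ ey z) (ex z)) - eval_y s l M v"
    by (simp add: binomial_dvd_monom_reduce dvd_sum flip: sum_subtractf)
qed

lemma smult_poly_eq_sum_monom:
  fixes f g :: "'a::comm_semiring_1 poly"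
  shows
  "smult (poly g v) f = (\<Sum>(a, b)\<in>{..degree f} \<times> {..degree g}. monom (coeff f a * coeff g b * v ^ b) a)"
proof -
  have "smult (poly g v) f = (\<Sum>a\<le>degree f. monom (coeff f a * poly g v) a)"
    by (rule poly_eqI) (auto simp: coeff_sum coeff_monom coeff_eq_0 mult.commute)
  also have "\<dots> = (\<Sum>a\<le>degree f. \<Sum>b\<le>degree g. monom (coeff f a * coeff g b * v ^ b) a)"
    by (simp add: poly_altdef sum_distrib_left monom_sum ac_simps)
  finally show ?thesis
    by (simp add: sum.cartesian_product)
qed

lemma eval_y_R_emb:
  assumes "0 < s" "0 < l" "v ^ l = \<beta>"
  shows "eval_y s l (R_emb s l \<alpha> \<beta> f g) v = smult (poly g v) f mod (monom 1 s - [:\<alpha>:])"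
proof -
  let ?A = "{..degree f} \<times> {..degree g}"
  define K where "K = (\<lambda>(a, b). coeff f a * coeff g b)"
  have "eval_y s l (R_emb s l \<alpha> \<beta> f g) v
      = (\<Sum>z\<in>?A. monom (K z * v ^ snd z) (fst z)) mod (monom 1 s - [:\<alpha>:])"
    by (rule eval_y_reduce[OF _ assms])
      (auto simp: R_emb_def K_def sum.cartesian_product ac_simps intro!: sum.cong)
  also have "(\<Sum>z\<in>?A. monom (K z * v ^ snd z) (fst z)) = smult (poly g v) f"
    by (simp add: smult_poly_eq_sum_monom K_def case_prod_unfold)
  finally show ?thesis .
qed

lemma eval_y_R_mul:
  assumes "0 < s" "0 < l" "v ^ l = \<beta>"
  shows "eval_y s l (R_mul s l \<alpha> \<beta> c d) v
    = (eval_y s l c v * eval_y s l d v) mod (monom 1 s - [:\<alpha>:])"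
proof -
  let ?A = "{..<s} \<times> {..<l} \<times> {..<s} \<times> {..<l}"
  define K where "K = (\<lambda>(a, b, a', b'). c a b * d a' b')"
  define ex where "ex = (\<lambda>(a::nat, b::nat, a', b'::nat). a + a')"
  define ey where "ey = (\<lambda>(a::nat, b::nat, a'::nat, b'). b + b')"
  have "eval_y s l (R_mul s l \<alpha> \<beta> c d) v
      = (\<Sum>z\<in>?A. monom (K z * v ^ ey z) (ex z)) mod (monom 1 s - [:\<alpha>:])"
    by (rule eval_y_reduce[OF _ assms])
      (auto simp: R_mul_def K_def ex_def ey_def sum.cartesian_product ac_simps intro!: sum.cong)
  also have "(\<Sum>z\<in>?A. monom (K z * v ^ ey z) (ex z)) = eval_y s l c v * eval_y s l d v"
  proof -
    have eval: "eval_y s l c v = (\<Sum>a<s. \<Sum>b<l. monom (c a b * v ^ b) a)" for c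
      by (simp add: eval_y_def monom_sum)
    show ?thesis
      unfolding eval sum_distrib_right unfolding sum_distrib_left
      by (simp add: sum.cartesian_product K_def ex_def ey_def mult_monom power_add ac_simps case_prod_unfold)
  qed
  finally show ?thesis .
qed

section \<open>Orthogonal node sets\<close>

(* The Vandermonde matrices V_sigma, V_tau of the nodes satisfy V_sigma * V_tau^T = L * I, so the
   substitutions y := sigma m, m < l, determine an element of R. *)
definition orthogonal_nodes :: "nat \<Rightarrow> (nat \<Rightarrow> 'a::field) \<Rightarrow> (nat \<Rightarrow> 'a) \<Rightarrow> 'a \<Rightarrow> bool" where
  "orthogonal_nodes l \<sigma> \<tau> L \<longleftrightarrow>
     (\<forall>a<l. \<forall>b<l. (\<Sum>m<l. \<sigma> m ^ a * \<tau> m ^ b) = (if a = b then L else 0))"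

lemma orthogonal_nodes_commute: "orthogonal_nodes l \<sigma> \<tau> L \<Longrightarrow> orthogonal_nodes l \<tau> \<sigma> L"
  unfolding orthogonal_nodes_def by (simp add: mult.commute eq_commute[of _ "_ :: nat"])

lemma sum_coeff_eval_y_nodes:
  assumes "c \<in> R_carrier s l" "orthogonal_nodes l \<sigma> \<tau> L" "j < l"
  shows "(\<Sum>m<l. coeff (eval_y s l c (\<sigma> m)) i * \<tau> m ^ j) = L * c i j"
proof (cases "i < s")
  case True
  have "(\<Sum>m<l. coeff (eval_y s l c (\<sigma> m)) i * \<tau> m ^ j)
      = (\<Sum>m<l. \<Sum>j'<l. c i j' * (\<sigma> m ^ j' * \<tau> m ^ j))"
    using True by (simp add: coeff_eval_y sum_distrib_left sum_distrib_right ac_simps)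
  also have "\<dots> = (\<Sum>j'<l. c i j' * (\<Sum>m<l. \<sigma> m ^ j' * \<tau> m ^ j))"
    by (subst sum.swap) (simp add: sum_distrib_left)
  also have "\<dots> = (\<Sum>j'<l. c i j' * (if j' = j then L else 0))"
    using assms(2,3) unfolding orthogonal_nodes_def by (intro sum.cong refl) auto
  finally show ?thesis
    using assms(3) by (simp add: if_distrib ac_simps cong: if_cong)
next
  case False
  then show ?thesis
    using assms(1) by (simp add: coeff_eval_y R_carrier_def)
qed

lemma R_eqI_eval_y_nodes:
  assumes c: "c \<in> R_carrier s l" and d: "d \<in> R_carrier s l"
    and nodes: "orthogonal_nodes l \<sigma> \<tau> L" "L \<noteq> 0"
    and eq: "\<And>m. m < l \<Longrightarrow> eval_y s l c (\<sigma> m) = eval_y s l d (\<sigma> m)"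
  shows "c = d"
proof (intro ext)
  fix i j
  show "c i j = d i j"
  proof (cases "j < l")
    case True
    have "(\<Sum>m<l. coeff (eval_y s l c (\<sigma> m)) i * \<tau> m ^ j)
        = (\<Sum>m<l. coeff (eval_y s l d (\<sigma> m)) i * \<tau> m ^ j)"
      by (simp add: eq)
    then have "L * c i j = L * d i j"
      using sum_coeff_eval_y_nodes[OF c nodes(1) True] sum_coeff_eval_y_nodes[OF d nodes(1) True]
      by simp
    then show ?thesis
      using nodes(2) by simp
  next
    case False
    then show ?thesis
      using c d by (simp add: R_carrier_def)
  qed
qed

lemma R_inner_eq_sum_poly_inner:
  assumes c: "c \<in> R_carrier s l" and d: "d \<in> R_carrier s l"
    and nodes: "orthogonal_nodes l \<sigma> \<tau> L" "L \<noteq> 0"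
  shows "R_inner s l c d
    = inverse L * (\<Sum>m<l. poly_inner s (eval_y s l c (\<sigma> m)) (eval_y s l d (\<tau> m)))"
proof -
  have "(\<Sum>m<l. poly_inner s (eval_y s l c (\<sigma> m)) (eval_y s l d (\<tau> m)))
      = (\<Sum>m<l. \<Sum>i<s. \<Sum>j<l. d i j * (coeff (eval_y s l c (\<sigma> m)) i * \<tau> m ^ j))"
    by (intro sum.cong refl) (simp add: poly_inner_def coeff_eval_y sum_distrib_left ac_simps)
  also have "\<dots> = (\<Sum>i<s. \<Sum>j<l. \<Sum>m<l. d i j * (coeff (eval_y s l c (\<sigma> m)) i * \<tau> m ^ j))"
    by (subst sum.swap) (intro sum.cong refl sum.swap)
  also have "\<dots> = (\<Sum>i<s. \<Sum>j<l. d i j * (\<Sum>m<l. coeff (eval_y s l c (\<sigma> m)) i * \<tau> m ^ j))"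
    by (simp add: sum_distrib_left)
  also have "\<dots> = L * R_inner s l c d"
    using sum_coeff_eval_y_nodes[OF c nodes(1)]
    by (simp add: R_inner_def sum_distrib_left ac_simps)
  finally show ?thesis
    using nodes(2) by simp
qed

lemma sum_geometric_nodes_power:
  fixes c z :: "'a::field"
  assumes "z ^ d \<noteq> 1" "(z ^ d) ^ l = 1"
  shows "(\<Sum>m<l. (c * z ^ m) ^ d) = 0"
proof -
  have "(\<Sum>m<l. (c * z ^ m) ^ d) = c ^ d * (\<Sum>m<l. (z ^ d) ^ m)"
    by (simp add: sum_distrib_left power_mult_distrib flip: power_mult add: mult.commute)
  also have "\<dots> = 0"
    using assms by (simp add: geometric_sum)
  finally show ?thesis .
qed

lemma orthogonal_nodes_inverse:
  fixes \<sigma> \<tau> :: "nat \<Rightarrow> 'a::field"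
  assumes inverse: "\<And>m. \<sigma> m * \<tau> m = 1"
    and sum_\<sigma>: "\<And>d. 0 < d \<Longrightarrow> d < l \<Longrightarrow> (\<Sum>m<l. \<sigma> m ^ d) = 0"
    and sum_\<tau>: "\<And>d. 0 < d \<Longrightarrow> d < l \<Longrightarrow> (\<Sum>m<l. \<tau> m ^ d) = 0"
  shows "orthogonal_nodes l \<sigma> \<tau> (of_nat l)"
  unfolding orthogonal_nodes_def
proof (intro allI impI)
  fix a b
  assume "a < l" "b < l"
  have cancel: "x ^ (k + n) * y ^ k = x ^ n" if "x * y = 1" for x y :: 'a and k n
  proof -
    have "x ^ (k + n) * y ^ k = x ^ n * (x * y) ^ k"
      by (simp add: power_add power_mult_distrib ac_simps)
    then show ?thesis
      using that by simp
  qed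
  consider "a = b" | "b < a" | "a < b"
    by linarith
  then show "(\<Sum>m<l. \<sigma> m ^ a * \<tau> m ^ b) = (if a = b then of_nat l else 0)"
  proof cases
    case 1
    then show ?thesis
      using cancel[OF inverse, where k = b and n = 0] by simp
  next
    case 2
    then have "\<sigma> m ^ a * \<tau> m ^ b = \<sigma> m ^ (a - b)" for m
      using cancel[OF inverse, where k = b and n = "a - b"] by simp
    then show ?thesis
      using 2 \<open>a < l\<close> sum_\<sigma>[of "a - b"] by simp
  next
    case 3
    have inverse': "\<tau> m * \<sigma> m = 1" for m
      using inverse[of m] by (simp add: mult.commute)
    have "\<sigma> m ^ a * \<tau> m ^ b = \<tau> m ^ (b - a)" for m
      using 3 cancel[OF inverse', where k = a and n = "b - a"] by (simp add: mult.commute)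
    then show ?thesis
      using 3 \<open>b < l\<close> sum_\<tau>[of "b - a"] by simp
  qed
qed

lemma poly_lagrange_basis:
  fixes x :: "nat \<Rightarrow> 'a::field"
  assumes "inj_on x {0..<l}" "k < l" "m < l"
  shows "poly (\<Prod>j\<in>{0..<l} - {k}. smult (inverse (x k - x j)) [:- x j, 1:]) (x m)
    = (if k = m then 1 else 0)"
proof (cases "k = m")
  case True
  have "poly (smult (inverse (x k - x j)) [:- x j, 1:]) (x k) = 1" if "j \<in> {0..<l} - {k}" for j
  proof -
    have "x k - x j \<noteq> 0"
      using that assms(1,2) by (auto simp: inj_on_eq_iff)
    moreover have "poly (smult (inverse (x k - x j)) [:- x j, 1:]) (x k) = inverse (x k - x j) * (x k - x j)"
      by (simp add: algebra_simps)
    ultimately show ?thesis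
      by simp
  qed
  then show ?thesis
    using True by (simp add: poly_prod)
next
  case False
  then show ?thesis
    using assms(3) by (auto simp: poly_prod prod_zero_iff intro!: bexI[of _ m])
qed

section \<open>Reciprocal duality modulo x^s - alpha\<close>

lemma smult_sum_right: "smult c (\<Sum>x\<in>A. f x) = (\<Sum>x\<in>A. smult c (f x))"
  by (induction A rule: infinite_finite_induct) (simp_all add: smult_add_right)

lemma poly_inner_eq_coeff_mult_reflect_poly:
  "degree g < n \<Longrightarrow> poly_inner n f g = coeff (f * reflect_poly g) (degree g)"
  unfolding poly_inner_def coeff_mult
  by (rule sum.mono_neutral_cong_right) (auto simp: coeff_reflect_poly coeff_eq_0)

lemma poly_inner_diff_right: "poly_inner n f (g - h) = poly_inner n f g - poly_inner n f h"
  by (simp add: poly_inner_def algebra_simps sum_subtractf)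

lemma poly_inner_monom_mult_left:
  fixes f g :: "'a::comm_ring_1 poly"
  assumes "degree g = k" "k < n"
  shows "poly_inner n (monom 1 k * f) g = coeff f 0 * coeff g k"
proof -
  have "coeff (monom 1 k * f) i * coeff g i = (if i = k then coeff f 0 * coeff g k else 0)" for i
    using assms(1) by (auto simp: coeff_monom_mult coeff_eq_0)
  then show ?thesis
    using assms(2) by (simp add: poly_inner_def)
qed

lemma reflect_poly_binomial:
  fixes \<alpha> :: "'a::field"
  assumes "0 < s" "\<alpha> * \<alpha> = 1"
  shows "reflect_poly (monom 1 s - [:\<alpha>:]) = smult (- \<alpha>) (monom 1 s - [:\<alpha>:])"
proof (rule poly_eqI)
  have coeff: "coeff (monom (1::'a) s - [:\<alpha>:]) n = (if n = s then 1 else 0) - (if n = 0 then \<alpha> else 0)" for n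
    by (cases n) (auto simp: coeff_monom)
  show "coeff (reflect_poly (monom 1 s - [:\<alpha>:])) n = coeff (smult (- \<alpha>) (monom 1 s - [:\<alpha>:])) n" for n
    unfolding coeff_reflect_poly degree_binomial[OF assms(1)] coeff_smult coeff using assms by auto
qed

context
  fixes s :: nat and \<alpha> :: "'a::field" and p h :: "'a poly"
  assumes s: "0 < s" and \<alpha>: "\<alpha> \<noteq> 0" and factor: "p * h = monom 1 s - [:\<alpha>:]"
begin

lemma binomial_factors_nonzero: "p \<noteq> 0" "h \<noteq> 0"
proof -
  have "monom 1 s - [:\<alpha>:] \<noteq> 0"
    using degree_binomial[OF s, of \<alpha>] s by auto
  then show "p \<noteq> 0" "h \<noteq> 0"
    using factor by auto
qed

lemma coeff_0_binomial_factors: "coeff p 0 \<noteq> 0" "coeff h 0 \<noteq> 0"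
proof -
  have "coeff p 0 * coeff h 0 = - \<alpha>"
    using arg_cong[OF factor, of "\<lambda>f. coeff f 0"] s by (simp add: coeff_mult coeff_monom)
  then show "coeff p 0 \<noteq> 0" "coeff h 0 \<noteq> 0"
    using \<alpha> by auto
qed

lemma degree_binomial_factors: "degree p + degree h = s"
  using degree_mult_eq[OF binomial_factors_nonzero] factor degree_binomial[OF s, of \<alpha>] by simp

lemma degree_reflect_binomial_factor: "degree (reflect_poly h) = degree h"
  using coeff_0_binomial_factors(2) by simp

lemma reflect_binomial_factor_dvd:
  assumes "\<alpha> * \<alpha> = 1"
  shows "reflect_poly h dvd monom 1 s - [:\<alpha>:]"
proof -
  have "smult (- \<alpha>) (reflect_poly p * reflect_poly h) = monom 1 s - [:\<alpha>:]"
    using reflect_poly_binomial[OF s assms] assms by (simp flip: factor reflect_poly_mult)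
  then show ?thesis
    by (metis dvd_smult dvd_triv_right)
qed

(* The pairing is the coefficient of x^N, N = degree f + degree h, in g * reflect f * (x^s - alpha),
   and g * reflect f has degree < N. *)
lemma poly_inner_multiple_reflect_eq_0:
  assumes g: "degree (g * p) < s" and f: "degree (f * reflect_poly h) < s"
  shows "poly_inner s (g * p) (f * reflect_poly h) = 0"
proof (cases "g = 0 \<or> f = 0")
  case False
  let ?N = "degree (f * reflect_poly h)"
  let ?Z = "g * reflect_poly f"
  have "reflect_poly (f * reflect_poly h) = reflect_poly f * h"
    using coeff_0_binomial_factors(2) by (simp add: reflect_poly_mult)
  then have "g * p * reflect_poly (f * reflect_poly h) = ?Z * (p * h)"
    by (simp add: ac_simps)
  also have "\<dots> = ?Z * monom 1 s - smult \<alpha> ?Z"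
    by (simp add: factor right_diff_distrib)
  finally have product: "g * p * reflect_poly (f * reflect_poly h) = \<dots>" .
  have N: "?N = degree f + degree h"
    using False binomial_factors_nonzero degree_mult_eq[of f "reflect_poly h"]
    by (simp add: degree_reflect_binomial_factor)
  have "degree g < degree h"
    using False g degree_mult_eq[of g p] binomial_factors_nonzero degree_binomial_factors by simp
  then have "degree ?Z < ?N"
    using N degree_mult_le[of g "reflect_poly f"] degree_reflect_poly_le[of f] by linarith
  then have "coeff ?Z ?N = 0" "coeff (?Z * monom 1 s) ?N = 0"
    using f by (simp_all add: coeff_eq_0 mult.commute[of ?Z] coeff_monom_mult)
  then show ?thesis
    using f by (simp add: poly_inner_eq_coeff_mult_reflect_poly product)
qed (auto simp: poly_inner_def)

lemma reflect_dvd_if_orthogonal: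
  assumes E: "degree E < s"
    and orth: "\<And>g. degree (g * p) < s \<Longrightarrow> poly_inner s (g * p) E = 0"
  shows "reflect_poly h dvd E"
proof (rule ccontr)
  let ?Q = "reflect_poly h"
  let ?R = "E mod ?Q"
  let ?g = "monom 1 (degree ?R)"
  assume "\<not> ?Q dvd E"
  then have R: "?R \<noteq> 0"
    by (simp add: dvd_eq_mod_eq_0)
  then have "degree ?R < degree h"
    using degree_mod_less'[of ?Q E] binomial_factors_nonzero by (simp add: degree_reflect_binomial_factor)
  then have deg_g: "degree (?g * p) < s" and deg_R: "degree ?R < s"
    using degree_binomial_factors binomial_factors_nonzero
    by (simp_all add: degree_mult_eq degree_monom_eq)
  have "degree (E div ?Q * ?Q) < s"
    using degree_diff_less[OF E deg_R] by (simp add: minus_mod_eq_div_mult)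
  then have "poly_inner s (?g * p) ?R = 0"
    using orth[OF deg_g] poly_inner_multiple_reflect_eq_0[OF deg_g]
    by (simp add: poly_inner_diff_right flip: minus_div_mult_eq_mod)
  moreover have "poly_inner s (?g * p) ?R = coeff p 0 * lead_coeff ?R"
    using deg_R by (simp add: poly_inner_monom_mult_left)
  ultimately show False
    using R coeff_0_binomial_factors(1) by simp
qed

end


section \<open>The roots of y^l - beta\<close>

(* Translating by 1 permutes the finite ring, so the sum of its elements absorbs card UNIV copies of 1. *)
lemma of_nat_card_UNIV_eq_0: "of_nat (card (UNIV :: 'a set)) = (0::'a::{finite,ring_1})"
proof -
  have "(\<Sum>y\<in>UNIV. y + 1) = (\<Sum>y\<in>UNIV. y :: 'a)"
    by (rule sum.reindex_bij_witness[of _ "\<lambda>y. y - 1" "\<lambda>y. y + 1"]) auto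
  then show ?thesis
    by (simp add: sum.distrib)
qed

lemma of_nat_neq_0_if_card_cong_1:
  assumes "card (UNIV :: 'a set) mod n = 1 mod n"
  shows "of_nat n \<noteq> (0::'a::{finite,comm_ring_1})"
proof
  assume "of_nat n = (0::'a)"
  then have "CHAR('a) dvd n"
    by (simp add: of_nat_eq_0_iff_char_dvd)
  moreover have "CHAR('a) dvd card (UNIV :: 'a set)"
    using of_nat_card_UNIV_eq_0[where 'a = 'a] by (simp add: of_nat_eq_0_iff_char_dvd)
  ultimately have "CHAR('a) dvd 1 mod n"
    using assms by (metis dvd_mod_iff)
  then have "CHAR('a) dvd 1"
    using \<open>CHAR('a) dvd n\<close> dvd_mod_iff by blast
  then show False
    by (simp flip: of_nat_eq_0_iff_char_dvd)
qed

lemma mult_order_pos: "b * b = 1 \<Longrightarrow> 0 < mult_order (b::'a::field)"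
  unfolding mult_order_def by (rule LeastI2[where a = 2]) (simp_all add: power2_eq_square)

locale constacyclic_setting =
  fixes s l r :: nat and \<alpha> \<beta> \<omega> :: "'a::field"
  assumes s_pos: "0 < s" and l_pos: "0 < l" and r_pos: "0 < r"
    and alpha_square: "\<alpha> * \<alpha> = 1" and beta_square: "\<beta> * \<beta> = 1"
    and primitive: "primitive_root (r * l) \<omega>" and omega_pow_l: "\<omega> ^ l = \<beta>"
    and of_nat_l_nonzero: "of_nat l \<noteq> (0::'a)"
begin

abbreviation modulus :: "'a poly" where
  "modulus \<equiv> monom 1 s - [:\<alpha>:]"

(* The nodes are the l distinct roots of y^l - beta, and eta k is the Lagrange basis polynomial
   of node k. *)
definition node :: "nat \<Rightarrow> 'a" where
  "node m = \<omega> ^ (1 + m * r)"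

lemma omega_r_power_neq_1: "0 < d \<Longrightarrow> d < l \<Longrightarrow> (\<omega> ^ r) ^ d \<noteq> 1"
  using primitive r_pos by (simp add: primitive_root_def flip: power_mult)

lemma omega_r_power_pow_l: "((\<omega> ^ r) ^ d) ^ l = 1"
proof -
  have "((\<omega> ^ r) ^ d) ^ l = (\<omega> ^ (r * l)) ^ d"
    by (simp add: mult.commute mult.left_commute flip: power_mult)
  then show ?thesis
    using primitive by (simp add: primitive_root_def)
qed

lemma node_eq: "node m = \<omega> * (\<omega> ^ r) ^ m"
  by (simp add: node_def power_add ac_simps flip: power_mult)

lemma omega_nonzero: "\<omega> \<noteq> 0"
  using primitive l_pos r_pos by (auto simp: primitive_root_def power_0_left)

lemma node_nonzero: "node m \<noteq> 0"
  by (simp add: node_def omega_nonzero)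

lemma node_pow_l: "node m ^ l = \<beta>"
  using omega_r_power_pow_l[of m] by (simp add: node_eq power_mult_distrib omega_pow_l ac_simps flip: power_mult)

lemma inverse_node_pow_l: "inverse (node m) ^ l = \<beta>"
  using beta_square by (simp add: power_inverse node_pow_l inverse_unique)

lemma inj_on_node: "inj_on node {0..<l}"
proof -
  have "node x \<noteq> node y" if "x < y" "y < l" for x y
  proof -
    have "node y = node x * (\<omega> ^ r) ^ (y - x)"
      using that(1) by (simp add: node_eq mult.assoc flip: power_add)
    then show ?thesis
      using that node_nonzero[of x] omega_r_power_neq_1[of "y - x"] by auto
  qed
  then show ?thesis
    by (intro inj_onI) (metis atLeastLessThan_iff linorder_neqE_nat)
qed

lemma orthogonal_nodes_node: "orthogonal_nodes l node (\<lambda>m. inverse (node m)) (of_nat l)"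
proof (rule orthogonal_nodes_inverse)
  fix d
  assume d: "0 < d" "d < l"
  show "(\<Sum>m<l. node m ^ d) = 0"
    using sum_geometric_nodes_power[OF omega_r_power_neq_1[OF d] omega_r_power_pow_l, of \<omega>]
    by (simp add: node_eq)
  have "inverse (node m) = inverse \<omega> * inverse (\<omega> ^ r) ^ m" for m
    by (simp add: node_eq power_inverse)
  then show "(\<Sum>m<l. inverse (node m) ^ d) = 0"
    using sum_geometric_nodes_power[of "inverse (\<omega> ^ r)" d l "inverse \<omega>"]
      omega_r_power_neq_1[OF d] omega_r_power_pow_l[of d]
    by (simp add: power_inverse)
qed (simp add: node_nonzero)

lemma poly_eta_node:
  assumes "k < l" "m < l"
  shows "poly (eta l r \<omega> k) (node m) = (if k = m then 1 else 0)"
  using poly_lagrange_basis[OF inj_on_node assms] by (simp add: eta_def node_def)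

definition eta_scale :: "nat \<Rightarrow> 'a" where
  "eta_scale m = inverse (node m) ^ degree (eta l r \<omega> m)"

lemma eta_scale_nonzero: "eta_scale m \<noteq> 0"
  by (simp add: eta_scale_def node_nonzero)

lemma poly_reflect_eta_inverse_node:
  assumes "k < l" "m < l"
  shows "poly (reflect_poly (eta l r \<omega> k)) (inverse (node m)) = (if k = m then eta_scale m else 0)"
  using assms by (simp add: poly_reflect_poly_nz node_nonzero poly_eta_node eta_scale_def)

lemma eval_y_R_emb_eta:
  assumes "k < l" "m < l"
  shows "eval_y s l (R_emb s l \<alpha> \<beta> f (eta l r \<omega> k)) (node m) = (if k = m then f mod modulus else 0)"
  using assms by (simp add: eval_y_R_emb[OF s_pos l_pos node_pow_l] poly_eta_node)

lemma eval_y_R_emb_reflect_eta: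
  assumes "k < l" "m < l"
  shows "eval_y s l (R_emb s l \<alpha> \<beta> f (reflect_poly (eta l r \<omega> k))) (inverse (node m))
    = (if k = m then smult (eta_scale m) (f mod modulus) else 0)"
  using assms
  by (simp add: eval_y_R_emb[OF s_pos l_pos inverse_node_pow_l] poly_reflect_eta_inverse_node mod_smult_left)

lemma R_eqI_eval_node:
  "c \<in> R_carrier s l \<Longrightarrow> d \<in> R_carrier s l \<Longrightarrow>
    (\<And>m. m < l \<Longrightarrow> eval_y s l c (node m) = eval_y s l d (node m)) \<Longrightarrow> c = d"
  using R_eqI_eval_y_nodes[OF _ _ orthogonal_nodes_node of_nat_l_nonzero] by blast

lemma R_eqI_eval_inverse_node:
  "c \<in> R_carrier s l \<Longrightarrow> d \<in> R_carrier s l \<Longrightarrow>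
    (\<And>m. m < l \<Longrightarrow> eval_y s l c (inverse (node m)) = eval_y s l d (inverse (node m))) \<Longrightarrow> c = d"
  using R_eqI_eval_y_nodes[OF _ _ orthogonal_nodes_commute[OF orthogonal_nodes_node] of_nat_l_nonzero]
  by blast

lemma R_inner_eq_sum_poly_inner_node:
  assumes "c \<in> R_carrier s l" "d \<in> R_carrier s l"
  shows "R_inner s l c d = inverse (of_nat l)
    * (\<Sum>m<l. poly_inner s (eval_y s l c (node m)) (eval_y s l d (inverse (node m))))"
  by (rule R_inner_eq_sum_poly_inner[OF assms orthogonal_nodes_node of_nat_l_nonzero])

lemma mod_modulus_less: "degree f < s \<Longrightarrow> f mod modulus = f"
  using s_pos by (simp add: mod_poly_less degree_binomial)

lemma R_inner_R_emb_eta: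
  assumes k: "k < l" and f: "degree f < s" and d: "d \<in> R_carrier s l"
  shows "R_inner s l (R_emb s l \<alpha> \<beta> f (eta l r \<omega> k)) d
    = inverse (of_nat l) * poly_inner s f (eval_y s l d (inverse (node k)))"
proof -
  let ?c = "R_emb s l \<alpha> \<beta> f (eta l r \<omega> k)"
  have "eval_y s l ?c (node m) = (if k = m then f else 0)" if "m < l" for m
    using k that mod_modulus_less[OF f] by (auto simp: eval_y_R_emb_eta)
  then have "(\<Sum>m<l. poly_inner s (eval_y s l ?c (node m)) (eval_y s l d (inverse (node m))))
      = (\<Sum>m<l. if k = m then poly_inner s f (eval_y s l d (inverse (node m))) else 0)"
    by (intro sum.cong refl) (simp add: poly_inner_def)
  then show ?thesis
    using k by (simp add: R_inner_eq_sum_poly_inner_node[OF R_emb_carrier d])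
qed

lemma R_mul_R_emb_const:
  assumes "c \<in> R_carrier s l"
  shows "R_mul s l \<alpha> \<beta> (R_emb s l \<alpha> \<beta> [:a:] 1) c = R_smult a c"
proof (rule R_eqI_eval_node[OF R_mul_carrier R_smult_carrier[OF assms]])
  fix m
  have "degree (smult a (eval_y s l c (node m))) < s"
    using degree_smult_le[of a "eval_y s l c (node m)"] degree_eval_y_less[OF s_pos] by (rule le_less_trans)
  then have "[:a:] mod modulus = [:a:]"
      "smult a (eval_y s l c (node m)) mod modulus = smult a (eval_y s l c (node m))"
    using s_pos by (simp_all add: mod_modulus_less)
  then show "eval_y s l (R_mul s l \<alpha> \<beta> (R_emb s l \<alpha> \<beta> [:a:] 1) c) (node m) = eval_y s l (R_smult a c) (node m)"
    by (simp add: eval_y_R_mul[OF s_pos l_pos node_pow_l] eval_y_R_emb[OF s_pos l_pos node_pow_l] eval_y_R_smult)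
qed

lemma R_mul_R_emb_monom:
  "R_mul s l \<alpha> \<beta> (R_emb s l \<alpha> \<beta> (monom 1 t) 1) (R_emb s l \<alpha> \<beta> f g) = R_emb s l \<alpha> \<beta> (monom 1 t * f) g"
  by (rule R_eqI_eval_node[OF R_mul_carrier R_emb_carrier])
    (simp add: eval_y_R_mul[OF s_pos l_pos node_pow_l] eval_y_R_emb[OF s_pos l_pos node_pow_l] mod_mult_eq ac_simps)

lemma R_smult_mem_ideal:
  assumes "R_ideal s l \<alpha> \<beta> I" "c \<in> I"
  shows "R_smult a c \<in> I"
proof -
  have "c \<in> R_carrier s l"
    using assms by (auto simp: R_ideal_def)
  then have "R_smult a c = R_mul s l \<alpha> \<beta> (R_emb s l \<alpha> \<beta> [:a:] 1) c"
    by (rule R_mul_R_emb_const[symmetric])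
  also have "\<dots> \<in> I"
    using assms by (simp add: R_ideal_def R_emb_carrier)
  finally show ?thesis .
qed

lemma lin_comb_mem_ideal:
  assumes I: "R_ideal s l \<alpha> \<beta> I" and "finite A" and B: "\<And>k. k \<in> A \<Longrightarrow> B k \<in> I"
  shows "lin_comb A u B \<in> I"
  using \<open>finite A\<close> B
proof (induction A rule: finite_induct)
  case empty
  then show ?case
    using I by (simp add: lin_comb_def R_zero_def R_ideal_def)
next
  case (insert k A)
  then have "R_add (R_smult (u k) (B k)) (lin_comb A u B) \<in> I"
    using I R_smult_mem_ideal by (simp add: R_ideal_def)
  then show ?case
    using insert(1,2) by (simp add: lin_comb_def R_add_def R_smult_def)
qed

end

section \<open>The dual code\<close>

locale constacyclic_code = constacyclic_setting +
  fixes C :: "(nat \<Rightarrow> nat \<Rightarrow> 'a) set" and p p' :: "nat \<Rightarrow> 'a poly"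
  assumes code_ideal: "R_ideal s l \<alpha> \<beta> C"
    and code_components: "\<And>j. j < l \<Longrightarrow>
      {f. degree f < s \<and> R_emb s l \<alpha> \<beta> f (eta l r \<omega> j) \<in> C} = {(g * p j) mod modulus | g. True}"
    and check_factor: "\<And>j. j < l \<Longrightarrow> p j * p' j = modulus"
begin

abbreviation dual_index :: "(nat \<times> nat) set" where
  "dual_index \<equiv> {(j, i). j < l \<and> i < degree (p j)}"

abbreviation dual_basis :: "nat \<times> nat \<Rightarrow> nat \<Rightarrow> nat \<Rightarrow> 'a" where
  "dual_basis \<equiv> \<lambda>(j, i). R_emb s l \<alpha> \<beta> (monom 1 i * reflect_poly (p' j)) (reflect_poly (eta l r \<omega> j))"

abbreviation dual_generators :: "(nat \<Rightarrow> nat \<Rightarrow> 'a) set" where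
  "dual_generators \<equiv> {R_emb s l \<alpha> \<beta> (reflect_poly (p' j)) (reflect_poly (eta l r \<omega> j)) | j. j < l}"

lemma alpha_nonzero: "\<alpha> \<noteq> 0"
  using alpha_square by auto

lemma code_carrier: "c \<in> C \<Longrightarrow> c \<in> R_carrier s l"
  using code_ideal by (auto simp: R_ideal_def)

lemma degree_check_factor: "k < l \<Longrightarrow> degree (p k) + degree (p' k) = s"
  by (rule degree_binomial_factors[OF s_pos alpha_nonzero check_factor])

lemma check_nonzero: "k < l \<Longrightarrow> p' k \<noteq> 0"
  by (rule binomial_factors_nonzero(2)[OF s_pos alpha_nonzero check_factor])

lemma degree_reflect_check: "k < l \<Longrightarrow> degree (reflect_poly (p' k)) = degree (p' k)"
  by (rule degree_reflect_binomial_factor[OF s_pos alpha_nonzero check_factor])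

lemma reflect_check_dvd_modulus: "k < l \<Longrightarrow> reflect_poly (p' k) dvd modulus"
  by (rule reflect_binomial_factor_dvd[OF s_pos alpha_nonzero check_factor alpha_square])

lemma p_dvd_eval_y_node:
  assumes c: "c \<in> C" and m: "m < l"
  shows "p m dvd eval_y s l c (node m)"
proof -
  let ?E = "eval_y s l c (node m)"
  have "R_mul s l \<alpha> \<beta> (R_emb s l \<alpha> \<beta> 1 (eta l r \<omega> m)) c = R_emb s l \<alpha> \<beta> ?E (eta l r \<omega> m)"
  proof (rule R_eqI_eval_node[OF R_mul_carrier R_emb_carrier])
    fix k
    assume k: "k < l"
    have "1 mod modulus = 1" "?E mod modulus = ?E"
      using s_pos by (simp_all add: mod_modulus_less degree_eval_y_less)
    then show "eval_y s l (R_mul s l \<alpha> \<beta> (R_emb s l \<alpha> \<beta> 1 (eta l r \<omega> m)) c) (node k)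
        = eval_y s l (R_emb s l \<alpha> \<beta> ?E (eta l r \<omega> m)) (node k)"
      using m k by (simp add: eval_y_R_mul[OF s_pos l_pos node_pow_l] eval_y_R_emb_eta)
  qed
  moreover have "R_mul s l \<alpha> \<beta> (R_emb s l \<alpha> \<beta> 1 (eta l r \<omega> m)) c \<in> C"
    using code_ideal c by (simp add: R_ideal_def R_emb_carrier)
  ultimately have "?E \<in> {f. degree f < s \<and> R_emb s l \<alpha> \<beta> f (eta l r \<omega> m) \<in> C}"
    using degree_eval_y_less[OF s_pos] by simp
  then obtain g where "?E = (g * p m) mod modulus"
    unfolding code_components[OF m] by blast
  moreover have "p m dvd modulus"
    using dvdI[OF check_factor[OF m, symmetric]] .
  ultimately show ?thesis
    by (simp add: dvd_mod)
qed

lemma R_emb_multiple_mem_code: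
  assumes "k < l" "degree (g * p k) < s"
  shows "R_emb s l \<alpha> \<beta> (g * p k) (eta l r \<omega> k) \<in> C"
proof -
  have "g * p k \<in> {(g * p k) mod modulus | g. True}"
    by (rule CollectI, rule exI[of _ g]) (simp add: mod_modulus_less[OF assms(2)])
  then show ?thesis
    using code_components[OF assms(1)] by blast
qed

lemma dual_reflect_check_dvd:
  assumes d: "d \<in> R_dual s l C" and k: "k < l"
  shows "reflect_poly (p' k) dvd eval_y s l d (inverse (node k))"
proof (rule reflect_dvd_if_orthogonal[OF s_pos alpha_nonzero check_factor[OF k] degree_eval_y_less[OF s_pos]])
  fix g
  assume g: "degree (g * p k) < s"
  have "R_inner s l (R_emb s l \<alpha> \<beta> (g * p k) (eta l r \<omega> k)) d = 0"
    using d R_emb_multiple_mem_code[OF k g] by (simp add: R_dual_altdef)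
  then show "poly_inner s (g * p k) (eval_y s l d (inverse (node k))) = 0"
    using d of_nat_l_nonzero by (simp add: R_inner_R_emb_eta[OF k g] R_dual_altdef)
qed

lemma R_inner_code_eq_0:
  assumes c: "c \<in> C" and d: "d \<in> R_carrier s l"
    and dvd: "\<And>k. k < l \<Longrightarrow> reflect_poly (p' k) dvd eval_y s l d (inverse (node k))"
  shows "R_inner s l c d = 0"
proof -
  have "poly_inner s (eval_y s l c (node m)) (eval_y s l d (inverse (node m))) = 0" if m: "m < l" for m
  proof -
    obtain g where g: "eval_y s l c (node m) = g * p m"
      using p_dvd_eval_y_node[OF c m] by (metis dvd_def mult.commute)
    obtain f where f: "eval_y s l d (inverse (node m)) = f * reflect_poly (p' m)"
      using dvd[OF m] by (metis dvd_def mult.commute)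
    have "degree (g * p m) < s" "degree (f * reflect_poly (p' m)) < s"
      using degree_eval_y_less[OF s_pos] by (simp_all flip: g f)
    then show ?thesis
      unfolding g f by (rule poly_inner_multiple_reflect_eq_0[OF s_pos alpha_nonzero check_factor[OF m]])
  qed
  then show ?thesis
    by (simp add: R_inner_eq_sum_poly_inner_node[OF code_carrier[OF c] d])
qed

lemma mem_dual_iff:
  "d \<in> R_dual s l C \<longleftrightarrow>
    d \<in> R_carrier s l \<and> (\<forall>k<l. reflect_poly (p' k) dvd eval_y s l d (inverse (node k)))"
  using dual_reflect_check_dvd R_inner_code_eq_0 by (auto simp: R_dual_altdef)

lemma R_ideal_dual: "R_ideal s l \<alpha> \<beta> (R_dual s l C)"
  unfolding R_ideal_def
proof (intro conjI ballI)
  show "R_dual s l C \<subseteq> R_carrier s l" "R_zero \<in> R_dual s l C"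
    by (auto simp: mem_dual_iff R_zero_carrier eval_y_R_zero)
next
  fix c d
  assume "c \<in> R_dual s l C" "d \<in> R_dual s l C"
  then show "R_add c d \<in> R_dual s l C"
    by (simp add: mem_dual_iff R_add_carrier eval_y_R_add)
next
  fix c x :: "nat \<Rightarrow> nat \<Rightarrow> 'a"
  assume c: "c \<in> R_dual s l C" and "x \<in> R_carrier s l"
  have "reflect_poly (p' k) dvd eval_y s l (R_mul s l \<alpha> \<beta> x c) (inverse (node k))" if k: "k < l" for k
    unfolding eval_y_R_mul[OF s_pos l_pos inverse_node_pow_l]
    using c k reflect_check_dvd_modulus[OF k] by (intro dvd_mod dvd_mult) (auto simp: mem_dual_iff)
  then show "R_mul s l \<alpha> \<beta> x c \<in> R_dual s l C"
    by (simp add: mem_dual_iff R_mul_carrier)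
qed

lemma dual_generators_subset_dual: "dual_generators \<subseteq> R_dual s l C"
proof clarify
  fix j
  assume j: "j < l"
  have "reflect_poly (p' k) dvd
      eval_y s l (R_emb s l \<alpha> \<beta> (reflect_poly (p' j)) (reflect_poly (eta l r \<omega> j))) (inverse (node k))"
    if k: "k < l" for k
    using j k reflect_check_dvd_modulus[OF k] by (auto simp: eval_y_R_emb_reflect_eta intro!: dvd_smult dvd_mod)
  then show "R_emb s l \<alpha> \<beta> (reflect_poly (p' j)) (reflect_poly (eta l r \<omega> j)) \<in> R_dual s l C"
    by (simp add: mem_dual_iff R_emb_carrier)
qed

lemma dual_index_eq_Sigma: "dual_index = (SIGMA j:{..<l}. {..<degree (p j)})"
  by auto

lemma eval_y_dual_basis:
  assumes k: "k < l" and t: "t < degree (p k)" and m: "m < l"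
  shows "eval_y s l (R_emb s l \<alpha> \<beta> (monom 1 t * reflect_poly (p' k)) (reflect_poly (eta l r \<omega> k)))
      (inverse (node m)) = (if k = m then smult (eta_scale m) (monom 1 t * reflect_poly (p' k)) else 0)"
proof -
  have "degree (monom 1 t * reflect_poly (p' k)) \<le> t + degree (p' k)"
    using degree_mult_le[of "monom 1 t" "reflect_poly (p' k)"] degree_reflect_poly_le[of "p' k"]
    by (simp add: degree_monom_eq)
  then have "degree (monom 1 t * reflect_poly (p' k)) < s"
    using t degree_check_factor[OF k] by linarith
  then show ?thesis
    using k m by (auto simp: eval_y_R_emb_reflect_eta mod_modulus_less)
qed

(* Only the m-th block of the basis survives the substitution y := 1 / node m. *)
lemma eval_y_lin_comb_dual_basis:
  assumes m: "m < l"
  shows "eval_y s l (lin_comb dual_index u dual_basis) (inverse (node m))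
    = smult (eta_scale m) ((\<Sum>t<degree (p m). monom (u (m, t)) t) * reflect_poly (p' m))"
proof -
  have "eval_y s l (lin_comb dual_index u dual_basis) (inverse (node m))
      = (\<Sum>k<l. \<Sum>t<degree (p k). smult (u (k, t)) (eval_y s l (R_emb s l \<alpha> \<beta>
          (monom 1 t * reflect_poly (p' k)) (reflect_poly (eta l r \<omega> k))) (inverse (node m))))"
    unfolding eval_y_lin_comb dual_index_eq_Sigma by (simp add: sum.Sigma split_def)
  also have "\<dots> = (\<Sum>t<degree (p m). smult (u (m, t)) (smult (eta_scale m) (monom 1 t * reflect_poly (p' m))))"
  proof -
    have "(\<Sum>t<degree (p k). smult (u (k, t)) (eval_y s l (R_emb s l \<alpha> \<beta>
          (monom 1 t * reflect_poly (p' k)) (reflect_poly (eta l r \<omega> k))) (inverse (node m))))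
        = (if k = m then \<Sum>t<degree (p m). smult (u (m, t)) (smult (eta_scale m)
          (monom 1 t * reflect_poly (p' m))) else 0)" if k: "k < l" for k
      using k m by (cases "k = m") (simp_all add: eval_y_dual_basis)
    then show ?thesis
      using m by simp
  qed
  also have "\<dots> = smult (eta_scale m) ((\<Sum>t<degree (p m). smult (u (m, t)) (monom 1 t)) * reflect_poly (p' m))"
    by (simp add: sum_distrib_left sum_distrib_right smult_sum_right ac_simps)
  also have "\<dots> = smult (eta_scale m) ((\<Sum>t<degree (p m). monom (u (m, t)) t) * reflect_poly (p' m))"
    by (simp add: smult_monom)
  finally show ?thesis .
qed

lemma fam_indep_dual_basis: "fam_indep dual_index dual_basis"
  unfolding fam_indep_def
proof (intro allI impI ballI)
  fix u z
  assume zero: "lin_comb dual_index u dual_basis = R_zero" and z: "z \<in> dual_index"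
  then obtain m t where z_eq: "z = (m, t)" and m: "m < l" and t: "t < degree (p m)"
    by auto
  have "smult (eta_scale m) ((\<Sum>t<degree (p m). monom (u (m, t)) t) * reflect_poly (p' m)) = 0"
    using eval_y_lin_comb_dual_basis[OF m, of u] by (simp add: zero eval_y_R_zero)
  then have "(\<Sum>t<degree (p m). monom (u (m, t)) t) = 0"
    using eta_scale_nonzero check_nonzero[OF m] by simp
  then have "coeff (\<Sum>t<degree (p m). monom (u (m, t)) t) t = 0"
    by simp
  then show "u z = 0"
    using t by (simp add: z_eq coeff_sum coeff_monom)
qed

lemma fam_span_dual_basis_subset: "fam_span dual_index dual_basis \<subseteq> R_dual s l C"
proof
  fix x
  assume "x \<in> fam_span dual_index dual_basis"
  then obtain u where x: "x = lin_comb dual_index u dual_basis"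
    by (auto simp: fam_span_def)
  have "reflect_poly (p' k) dvd eval_y s l x (inverse (node k))" if k: "k < l" for k
    unfolding x eval_y_lin_comb_dual_basis[OF k] by (intro dvd_smult dvd_triv_right)
  then show "x \<in> R_dual s l C"
    using x by (auto simp: mem_dual_iff intro!: lin_comb_carrier R_emb_carrier)
qed

lemma eval_y_dual_eq_sum_monom:
  assumes d: "d \<in> R_dual s l C" and m: "m < l"
  defines "H \<equiv> eval_y s l d (inverse (node m)) div reflect_poly (p' m)"
  shows "eval_y s l d (inverse (node m)) = (\<Sum>t<degree (p m). monom (coeff H t) t) * reflect_poly (p' m)"
proof -
  have H: "eval_y s l d (inverse (node m)) = H * reflect_poly (p' m)"
    using dual_reflect_check_dvd[OF d m] by (simp add: H_def)
  have "coeff H t = 0" if "degree (p m) \<le> t" for t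
  proof (cases "H = 0")
    case False
    have "degree (H * reflect_poly (p' m)) < s"
      using degree_eval_y_less[OF s_pos, of l d "inverse (node m)"] H by simp
    then have "degree H < degree (p m)"
      using False degree_check_factor[OF m] check_nonzero[OF m] degree_reflect_check[OF m]
      by (simp add: degree_mult_eq)
    then show ?thesis
      using that by (simp add: coeff_eq_0)
  qed simp
  then have "(\<Sum>t<degree (p m). monom (coeff H t) t) = H"
    by (intro poly_eqI) (auto simp: coeff_sum coeff_monom)
  then show ?thesis
    using H by simp
qed

lemma dual_subset_fam_span: "R_dual s l C \<subseteq> fam_span dual_index dual_basis"
proof
  fix d
  assume d: "d \<in> R_dual s l C"
  define H where "H m = eval_y s l d (inverse (node m)) div reflect_poly (p' m)" for m
  define u where "u z = coeff (H (fst z)) (snd z) / eta_scale (fst z)" for z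
  have "lin_comb dual_index u dual_basis = d"
  proof (rule R_eqI_eval_inverse_node[OF lin_comb_carrier])
    fix m
    assume m: "m < l"
    have "(\<Sum>t<degree (p m). monom (u (m, t)) t)
        = smult (inverse (eta_scale m)) (\<Sum>t<degree (p m). monom (coeff (H m) t) t)"
      by (simp add: u_def smult_sum_right smult_monom field_simps)
    then show "eval_y s l (lin_comb dual_index u dual_basis) (inverse (node m))
        = eval_y s l d (inverse (node m))"
      using eval_y_dual_eq_sum_monom[OF d m] eta_scale_nonzero
      by (simp add: eval_y_lin_comb_dual_basis[OF m] H_def)
  qed (use d in \<open>auto simp: mem_dual_iff intro: R_emb_carrier\<close>)
  then show "d \<in> fam_span dual_index dual_basis"
    by (auto simp: fam_span_def)
qed

lemma fam_span_dual_basis: "fam_span dual_index dual_basis = R_dual s l C"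
  using fam_span_dual_basis_subset dual_subset_fam_span by blast

lemma dual_eq_R_gen_ideal: "R_dual s l C = R_gen_ideal s l \<alpha> \<beta> dual_generators"
proof
  show "R_gen_ideal s l \<alpha> \<beta> dual_generators \<subseteq> R_dual s l C"
    unfolding R_gen_ideal_def using R_ideal_dual dual_generators_subset_dual by blast
next
  have "d \<in> I" if d: "d \<in> R_dual s l C" and I: "R_ideal s l \<alpha> \<beta> I" "dual_generators \<subseteq> I" for d I
  proof -
    obtain u where d_eq: "d = lin_comb dual_index u dual_basis"
      using d by (auto simp: fam_span_dual_basis[symmetric] fam_span_def)
    have "dual_basis (k, t) \<in> I" if "k < l" for k t
    proof -
      have "R_emb s l \<alpha> \<beta> (reflect_poly (p' k)) (reflect_poly (eta l r \<omega> k)) \<in> I"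
        using I(2) that by blast
      then have "R_mul s l \<alpha> \<beta> (R_emb s l \<alpha> \<beta> (monom 1 t) 1)
          (R_emb s l \<alpha> \<beta> (reflect_poly (p' k)) (reflect_poly (eta l r \<omega> k))) \<in> I"
        using I(1) by (simp add: R_ideal_def R_emb_carrier)
      then show ?thesis
        by (simp add: R_mul_R_emb_monom)
    qed
    then show ?thesis
      unfolding d_eq using I(1) by (intro lin_comb_mem_ideal) (auto simp: dual_index_eq_Sigma)
  qed
  then show "R_dual s l C \<subseteq> R_gen_ideal s l \<alpha> \<beta> dual_generators"
    by (auto simp: R_gen_ideal_def)
qed

end

theorem theorem3:
  fixes s l r :: nat and \<alpha> \<beta> \<omega> :: "'a::{field,finite}"
    and C :: "(nat \<Rightarrow> nat \<Rightarrow> 'a) set"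
    and p p' :: "nat \<Rightarrow> 'a poly"
  assumes "0 < s" and "0 < l"
    and "\<alpha> \<in> {1, -1}" and "\<beta> \<in> {1, -1}"
    and r_def: "r = mult_order \<beta>"
    and "card (UNIV :: 'a set) mod (r * l) = 1 mod (r * l)"
    and "primitive_root (r * l) \<omega>" and "\<omega> ^ l = \<beta>"
    and "R_ideal s l \<alpha> \<beta> C"
    and p_monic: "\<And>j. j < l \<Longrightarrow> lead_coeff (p j) = 1"
    and p_dvd: "\<And>j. j < l \<Longrightarrow> p j dvd (monom 1 s - [:\<alpha>:])"
    and p_gen: "\<And>j. j < l \<Longrightarrow>
       {f. degree f < s \<and> R_emb s l \<alpha> \<beta> f (eta l r \<omega> j) \<in> C}
         = {(g * p j) mod (monom 1 s - [:\<alpha>:]) | g. True}"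
    and p'_def: "\<And>j. j < l \<Longrightarrow> p j * p' j = monom 1 s - [:\<alpha>:]"
  shows "R_dual s l C = R_gen_ideal s l \<alpha> \<beta>
           {R_emb s l \<alpha> \<beta> (reflect_poly (p' j)) (reflect_poly (eta l r \<omega> j)) | j. j < l}
       \<and> fam_indep {(j, i). j < l \<and> i < degree (p j)}
           (\<lambda>(j, i). R_emb s l \<alpha> \<beta> (monom 1 i * reflect_poly (p' j)) (reflect_poly (eta l r \<omega> j)))
       \<and> fam_span {(j, i). j < l \<and> i < degree (p j)}
           (\<lambda>(j, i). R_emb s l \<alpha> \<beta> (monom 1 i * reflect_poly (p' j)) (reflect_poly (eta l r \<omega> j)))
         = R_dual s l C"
proof -
  have alpha: "\<alpha> * \<alpha> = 1" and beta: "\<beta> * \<beta> = 1"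
    using assms(3,4) by auto
  have "of_nat (r * l) \<noteq> (0::'a)"
    using assms(6) by (rule of_nat_neq_0_if_card_cong_1)
  then have "of_nat l \<noteq> (0::'a)"
    by simp
  interpret constacyclic_code s l r \<alpha> \<beta> \<omega> C p p'
    using assms alpha beta mult_order_pos[OF beta] \<open>of_nat l \<noteq> 0\<close>
    by unfold_locales auto
  show ?thesis
    using dual_eq_R_gen_ideal fam_indep_dual_basis fam_span_dual_basis by simp
qed

end
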